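(* Let $H\subset\mathrm{PGL}(2,\mathbb{C})=\mathrm{Aut}(\mathbb{P}^1)$ be a finite subgroup and let $\Lambda\subset\mathbb{P}^1$ be a finite subset. The following are equivalent: (1) $\Lambda$ is non-empty and $H$-invariant; (2) there exists an $H$-equivariant morphism $\delta\colon\mathbb{P}^1\to\mathbb{P}^1$ (i.e. $\delta\circ h=h\circ\delta$ for all $h\in H$) such that $\Lambda=\{q\in\mathbb{P}^1\mid\delta(q)=q\}$.
   Context: $\mathrm{PGL}(2,\mathbb{C})$ acts on $\mathbb{P}^1$ in the standard way; morphisms are algebraic. *)

theory Defs
  imports Complex_Main "HOL-Algebra.Group"
begin

text \<open>The complex projective line P^1 is modelled as complex option:
  Some z is the point [z:1], None is the point at infinity [1:0].\<close>
type_synonym P1 = "complex option"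

definition hom_coords :: "P1 \<Rightarrow> complex \<times> complex" where
  "hom_coords p = (case p of Some z \<Rightarrow> (z, 1) | None \<Rightarrow> (1, 0))"

definition proj_pt :: "complex \<times> complex \<Rightarrow> P1" where
  "proj_pt v = (if snd v = 0 then None else Some (fst v / snd v))"

definition hform :: "nat \<Rightarrow> (nat \<Rightarrow> complex) \<Rightarrow> complex \<times> complex \<Rightarrow> complex" where
  "hform d a v = (\<Sum>i\<le>d. a i * fst v ^ i * snd v ^ (d - i))"

text \<open>Algebraic morphisms P^1 \<rightarrow> P^1: given by [x:y] \<mapsto> [F(x,y):G(x,y)]
  with F, G binary forms of the same degree d without common nontrivial zero.\<close>
definition P1_morphism :: "(P1 \<Rightarrow> P1) \<Rightarrow> bool" where
  "P1_morphism \<delta> \<longleftrightarrow> (\<exists>d a b.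
     (\<forall>v. v \<noteq> (0, 0) \<longrightarrow> (hform d a v, hform d b v) \<noteq> (0, 0)) \<and>
     (\<forall>p. \<delta> p = proj_pt (hform d a (hom_coords p), hform d b (hom_coords p))))"

definition moebius :: "complex \<Rightarrow> complex \<Rightarrow> complex \<Rightarrow> complex \<Rightarrow> P1 \<Rightarrow> P1" where
  "moebius a b c d p =
     (let (x, y) = hom_coords p in proj_pt (a * x + b * y, c * x + d * y))"

text \<open>PGL(2,C) = Aut(P^1), realised as its (faithful) action on P^1,
  with group law composition.\<close>
definition PGL2 :: "(P1 \<Rightarrow> P1) monoid" where
  "PGL2 = \<lparr> carrier = {moebius a b c d | a b c d. a * d - b * c \<noteq> 0},
            mult = (\<circ>), one = id \<rparr>"

end

theory Submission
  imports Defs "HOL-Computational_Algebra.Fundamental_Theorem_Algebra"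
begin

text \<open>
  Write l' for the homogeneous coordinates of a point l. For a nonempty finite set \<Lambda>, the
  binary form \<Phi>_\<Lambda>(v) = \<Prod>_{m \<in> \<Lambda>} det(m', v) vanishes exactly on \<Lambda>. The pair of forms
  \<psi>(v) = \<Sum>_{l \<in> \<Lambda>} \<Phi>_{\<Lambda> - {l}}(v) l' of degree |\<Lambda>| - 1 satisfies
  det(\<psi>(v), v) = |\<Lambda>| \<Phi>_\<Lambda>(v), so the induced morphism \<delta> fixes exactly \<Lambda>; \<psi> has no nontrivial
  zero because at v = l' only the l-th summand survives. If a matrix M permutes \<Lambda>
  projectively, reindexing the sum gives \<psi>(M v) = C M \<psi>(v) with C \<noteq> 0, so \<delta> commutes with
  the induced Moebius transformation.

  Conversely, the fixed points of a morphism [F : G] of degree d are the zeros of the form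
  det((F, G)(v), v) of degree d + 1, which has one by the fundamental theorem of algebra, and an
  injective map commuting with \<delta> permutes the finitely many fixed points of \<delta>.
\<close>

definition det2 :: "complex \<times> complex \<Rightarrow> complex \<times> complex \<Rightarrow> complex" where
  "det2 u v = fst u * snd v - snd u * fst v"

definition scale2 :: "complex \<Rightarrow> complex \<times> complex \<Rightarrow> complex \<times> complex" where
  "scale2 k v = (k * fst v, k * snd v)"

definition lin2 :: "complex \<Rightarrow> complex \<Rightarrow> complex \<Rightarrow> complex \<Rightarrow> complex \<times> complex \<Rightarrow> complex \<times> complex" where
  "lin2 a b c d v = (a * fst v + b * snd v, c * fst v + d * snd v)"

lemma hom_coords_nonzero: "hom_coords p \<noteq> (0, 0)"
  by (cases p) (auto simp: hom_coords_def)

lemma proj_pt_hom_coords [simp]: "proj_pt (hom_coords p) = p"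
  by (cases p) (auto simp: hom_coords_def proj_pt_def)

lemma proj_pt_scale2: "k \<noteq> 0 \<Longrightarrow> proj_pt (scale2 k v) = proj_pt v"
  by (simp add: proj_pt_def scale2_def)

lemma scale2_hom_coords_proj_pt:
  assumes "v \<noteq> (0, 0)"
  obtains k where "k \<noteq> 0" "v = scale2 k (hom_coords (proj_pt v))"
proof (cases "snd v = 0")
  case True
  with assms show ?thesis
    by (intro that[of "fst v"]) (auto simp: proj_pt_def hom_coords_def scale2_def prod_eq_iff)
next
  case False
  then show ?thesis
    by (intro that[of "snd v"]) (auto simp: proj_pt_def hom_coords_def scale2_def prod_eq_iff)
qed

lemma proj_pt_eq_iff_det2: "v \<noteq> (0, 0) \<Longrightarrow> proj_pt v = p \<longleftrightarrow> det2 v (hom_coords p) = 0"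
  by (cases p) (auto simp: proj_pt_def hom_coords_def det2_def prod_eq_iff field_simps)

lemma det2_hom_coords_eq_0_iff: "v \<noteq> (0, 0) \<Longrightarrow> det2 (hom_coords p) v = 0 \<longleftrightarrow> p = proj_pt v"
  using proj_pt_eq_iff_det2[of v p] by (auto simp: det2_def algebra_simps)

lemma det2_scale2_left: "det2 (scale2 k u) v = k * det2 u v"
  and det2_scale2_right: "det2 u (scale2 k v) = k * det2 u v"
  by (simp_all add: det2_def scale2_def algebra_simps)

lemma det2_lin2: "det2 (lin2 a b c d u) (lin2 a b c d v) = (a * d - b * c) * det2 u v"
  by (simp add: det2_def lin2_def algebra_simps)

lemma lin2_scale2: "lin2 a b c d (scale2 k v) = scale2 k (lin2 a b c d v)"
  by (simp add: lin2_def scale2_def algebra_simps)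

lemma lin2_nonzero:
  assumes "a * d - b * c \<noteq> 0" "v \<noteq> (0, 0)"
  shows "lin2 a b c d v \<noteq> (0, 0)"
proof
  assume zero: "lin2 a b c d v = (0, 0)"
  have "(a * d - b * c) * fst v = d * fst (lin2 a b c d v) - b * snd (lin2 a b c d v)"
    and "(a * d - b * c) * snd v = a * snd (lin2 a b c d v) - c * fst (lin2 a b c d v)"
    by (simp_all add: lin2_def algebra_simps)
  with zero assms show False by (simp add: prod_eq_iff)
qed

lemma moebius_eq_proj_pt_lin2: "moebius a b c d p = proj_pt (lin2 a b c d (hom_coords p))"
  by (simp add: moebius_def lin2_def split_beta Let_def)

lemma moebius_proj_pt: "v \<noteq> (0, 0) \<Longrightarrow> moebius a b c d (proj_pt v) = proj_pt (lin2 a b c d v)"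
  by (metis scale2_hom_coords_proj_pt moebius_eq_proj_pt_lin2 lin2_scale2 proj_pt_scale2)

lemma hom_coords_moebius:
  assumes "a * d - b * c \<noteq> 0"
  obtains k where "k \<noteq> 0" "hom_coords (moebius a b c d p) = scale2 k (lin2 a b c d (hom_coords p))"
proof -
  have "lin2 a b c d (hom_coords p) \<noteq> (0, 0)"
    using lin2_nonzero[OF assms hom_coords_nonzero] .
  then obtain k where "k \<noteq> 0"
      "lin2 a b c d (hom_coords p) = scale2 k (hom_coords (moebius a b c d p))"
    unfolding moebius_eq_proj_pt_lin2 by (rule scale2_hom_coords_proj_pt)
  then show ?thesis
    by (intro that[of "1 / k"]) (auto simp: scale2_def)
qed

lemma inj_moebius:
  assumes "a * d - b * c \<noteq> 0"
  shows "inj (moebius a b c d)"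
proof (rule injI)
  fix p q
  assume "moebius a b c d p = moebius a b c d q"
  moreover obtain k where "k \<noteq> 0" "hom_coords (moebius a b c d q) = scale2 k (lin2 a b c d (hom_coords q))"
    using hom_coords_moebius[OF assms] .
  ultimately have "det2 (lin2 a b c d (hom_coords p)) (lin2 a b c d (hom_coords q)) = 0"
    using proj_pt_eq_iff_det2[OF lin2_nonzero[OF assms hom_coords_nonzero]]
    by (simp add: moebius_eq_proj_pt_lin2 det2_scale2_right)
  then have "det2 (hom_coords p) (hom_coords q) = 0"
    using assms by (simp add: det2_lin2)
  then show "p = q"
    using det2_hom_coords_eq_0_iff[OF hom_coords_nonzero] by simp
qed

lemma image_fixed_points_eq:
  assumes "finite {q. f q = q}" "inj h" "f \<circ> h = h \<circ> f"
  shows "h ` {q. f q = q} = {q. f q = q}"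
proof -
  have "h ` {q. f q = q} \<subseteq> {q. f q = q}"
    using assms(3) by (auto simp: fun_eq_iff)
  moreover have "card (h ` {q. f q = q}) = card {q. f q = q}"
    using assms(2) by (simp add: card_image inj_on_subset)
  ultimately show ?thesis
    using assms(1) by (simp add: card_subset_eq)
qed

definition is_hform :: "nat \<Rightarrow> (complex \<times> complex \<Rightarrow> complex) \<Rightarrow> bool" where
  "is_hform d f \<longleftrightarrow> (\<exists>a. f = hform d a)"

lemma hform_scale2: "hform d a (scale2 k v) = k ^ d * hform d a v"
  unfolding hform_def sum_distrib_left
proof (rule sum.cong)
  fix i
  assume "i \<in> {..d}"
  then have "k ^ d = k ^ i * k ^ (d - i)"
    by (simp flip: power_add)
  then show "a i * fst (scale2 k v) ^ i * snd (scale2 k v) ^ (d - i)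
      = k ^ d * (a i * fst v ^ i * snd v ^ (d - i))"
    by (simp add: scale2_def power_mult_distrib)
qed simp

lemma is_hform_const: "is_hform 0 (\<lambda>v. c)"
  unfolding is_hform_def hform_def by (intro exI[of _ "\<lambda>i. c"]) simp

lemma is_hform_zero: "is_hform d (\<lambda>v. 0)"
  unfolding is_hform_def hform_def by (intro exI[of _ "\<lambda>i. 0"]) simp

lemma is_hform_add:
  assumes "is_hform d f" "is_hform d g"
  shows "is_hform d (\<lambda>v. f v + g v)"
proof -
  obtain a b where "f = hform d a" "g = hform d b"
    using assms by (auto simp: is_hform_def)
  then have "(\<lambda>v. f v + g v) = hform d (\<lambda>i. a i + b i)"
    by (simp add: fun_eq_iff hform_def sum.distrib[symmetric] algebra_simps)
  then show ?thesis by (auto simp: is_hform_def)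
qed

lemma is_hform_cmult:
  assumes "is_hform d f"
  shows "is_hform d (\<lambda>v. c * f v)"
proof -
  obtain a where "f = hform d a"
    using assms by (auto simp: is_hform_def)
  then have "(\<lambda>v. c * f v) = hform d (\<lambda>i. c * a i)"
    by (simp add: fun_eq_iff hform_def sum_distrib_left algebra_simps)
  then show ?thesis by (auto simp: is_hform_def)
qed

lemma is_hform_sum:
  "finite S \<Longrightarrow> (\<And>s. s \<in> S \<Longrightarrow> is_hform d (f s)) \<Longrightarrow> is_hform d (\<lambda>v. \<Sum>s\<in>S. f s v)"
  by (induction S rule: finite_induct) (auto intro: is_hform_zero is_hform_add)

lemma is_hform_fst_mult:
  assumes "is_hform d f"
  shows "is_hform (Suc d) (\<lambda>v. fst v * f v)"
proof -
  obtain a where a: "f = hform d a"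
    using assms by (auto simp: is_hform_def)
  define b where "b i = (if i = 0 then 0 else a (i - 1))" for i
  have "(\<lambda>v. fst v * f v) = hform (Suc d) b"
    unfolding a hform_def sum.atMost_Suc_shift
    by (simp add: fun_eq_iff b_def sum_distrib_left algebra_simps)
  then show ?thesis by (auto simp: is_hform_def)
qed

lemma is_hform_snd_mult:
  assumes "is_hform d f"
  shows "is_hform (Suc d) (\<lambda>v. snd v * f v)"
proof -
  obtain a where a: "f = hform d a"
    using assms by (auto simp: is_hform_def)
  define b where "b i = (if i \<le> d then a i else 0)" for i
  have "(\<lambda>v. snd v * f v) = hform (Suc d) b"
    unfolding a hform_def sum.atMost_Suc sum_distrib_left
    by (auto simp: fun_eq_iff b_def Suc_diff_le intro!: sum.cong)
  then show ?thesis by (auto simp: is_hform_def)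
qed

lemma is_hform_det2_mult:
  assumes "is_hform d f"
  shows "is_hform (Suc d) (\<lambda>v. det2 u v * f v)"
proof -
  have "is_hform (Suc d) (\<lambda>v. fst u * (snd v * f v) + (- snd u) * (fst v * f v))"
    by (intro is_hform_add is_hform_cmult is_hform_fst_mult is_hform_snd_mult assms)
  then show ?thesis
    by (simp add: det2_def algebra_simps)
qed

lemma is_hform_det2_pair:
  assumes "is_hform d f" "is_hform d g"
  shows "is_hform (Suc d) (\<lambda>v. det2 (f v, g v) v)"
proof -
  have "is_hform (Suc d) (\<lambda>v. snd v * f v + (- 1) * (fst v * g v))"
    by (intro is_hform_add is_hform_cmult is_hform_fst_mult is_hform_snd_mult assms)
  then show ?thesis
    by (simp add: det2_def algebra_simps)
qed

lemma is_hform_det2_prod: "finite S \<Longrightarrow> is_hform (card S) (\<lambda>v. \<Prod>s\<in>S. det2 (g s) v)"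
  by (induction S rule: finite_induct) (auto intro: is_hform_const is_hform_det2_mult)

lemma hform_nontrivial_zero: "\<exists>v. v \<noteq> (0, 0) \<and> hform (Suc d) c v = 0"
proof (cases "c (Suc d) = 0")
  case True
  have "hform (Suc d) c (1, 0) = c (Suc d)"
    unfolding hform_def by (subst sum.remove[of _ "Suc d"]) (auto intro!: sum.neutral)
  with True show ?thesis by (intro exI[of _ "(1, 0)"]) auto
next
  case False
  define p where "p = (\<Sum>i\<le>Suc d. monom (c i) i)"
  have "coeff p (Suc d) \<noteq> 0"
    using False unfolding p_def by (subst coeff_sum_monom) auto
  then have "degree p \<noteq> 0"
    using le_degree by fastforce
  then have "\<not> constant (poly p)"
    by (simp add: constant_degree)
  then obtain z where "poly p z = 0"
    using fundamental_theorem_of_algebra by blast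
  moreover have "poly p z = hform (Suc d) c (z, 1)"
    by (simp add: p_def poly_sum poly_monom hform_def)
  ultimately show ?thesis by (intro exI[of _ "(z, 1)"]) auto
qed

lemma P1_morphism_has_fixed_point:
  assumes "P1_morphism \<delta>"
  shows "\<exists>q. \<delta> q = q"
proof -
  obtain d a b where nonzero: "\<And>v. v \<noteq> (0, 0) \<Longrightarrow> (hform d a v, hform d b v) \<noteq> (0, 0)"
    and \<delta>: "\<And>p. \<delta> p = proj_pt (hform d a (hom_coords p), hform d b (hom_coords p))"
    using assms unfolding P1_morphism_def by blast
  define f where "f v = det2 (hform d a v, hform d b v) v" for v
  have "is_hform (Suc d) f"
    unfolding f_def by (intro is_hform_det2_pair) (auto simp: is_hform_def)
  then obtain c where c: "f = hform (Suc d) c"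
    by (auto simp: is_hform_def)
  obtain v where v: "v \<noteq> (0, 0)" "f v = 0"
    using hform_nontrivial_zero[of d c] c by blast
  obtain k where "k \<noteq> 0" "v = scale2 k (hom_coords (proj_pt v))"
    using scale2_hom_coords_proj_pt[OF v(1)] .
  then have "f (hom_coords (proj_pt v)) = 0"
    using v(2) c hform_scale2 by (metis mult_eq_0_iff power_eq_0_iff)
  then have "\<delta> (proj_pt v) = proj_pt v"
    unfolding \<delta> f_def by (rule proj_pt_eq_iff_det2[OF nonzero[OF hom_coords_nonzero], THEN iffD2])
  then show ?thesis ..
qed

definition points_form :: "P1 set \<Rightarrow> complex \<times> complex \<Rightarrow> complex" where
  "points_form L v = (\<Prod>m\<in>L. det2 (hom_coords m) v)"

definition fixing_lift :: "P1 set \<Rightarrow> complex \<times> complex \<Rightarrow> complex \<times> complex" where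
  "fixing_lift L v =
     ((\<Sum>l\<in>L. fst (hom_coords l) * points_form (L - {l}) v),
      (\<Sum>l\<in>L. snd (hom_coords l) * points_form (L - {l}) v))"

definition fixing_map :: "P1 set \<Rightarrow> P1 \<Rightarrow> P1" where
  "fixing_map L p = proj_pt (fixing_lift L (hom_coords p))"

lemma points_form_eq_0_iff:
  "finite L \<Longrightarrow> v \<noteq> (0, 0) \<Longrightarrow> points_form L v = 0 \<longleftrightarrow> proj_pt v \<in> L"
  by (auto simp: points_form_def det2_hom_coords_eq_0_iff)

lemma points_form_remove:
  "finite L \<Longrightarrow> l \<in> L \<Longrightarrow> det2 (hom_coords l) v * points_form (L - {l}) v = points_form L v"
  unfolding points_form_def by (simp add: prod.remove)

lemma points_form_scale2: "points_form L (scale2 k v) = k ^ card L * points_form L v"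
  by (cases "finite L") (simp_all add: points_form_def det2_scale2_right prod.distrib)

lemma is_hform_points_form: "finite L \<Longrightarrow> is_hform (card L) (points_form L)"
  unfolding points_form_def by (rule is_hform_det2_prod)

lemma det2_fixing_lift:
  assumes "finite L"
  shows "det2 (fixing_lift L v) v = of_nat (card L) * points_form L v"
proof -
  have "det2 (fixing_lift L v) v = (\<Sum>l\<in>L. det2 (hom_coords l) v * points_form (L - {l}) v)"
    unfolding fixing_lift_def det2_def fst_conv snd_conv sum_distrib_right sum_subtractf[symmetric]
    by (rule sum.cong) (simp_all add: algebra_simps)
  also have "\<dots> = (\<Sum>l\<in>L. points_form L v)"
    using points_form_remove[OF assms] by simp
  finally show ?thesis by simp
qed

lemma fixing_lift_nonzero:
  assumes "finite L" "L \<noteq> {}" "v \<noteq> (0, 0)"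
  shows "fixing_lift L v \<noteq> (0, 0)"
proof (cases "proj_pt v \<in> L")
  case False
  then have "det2 (fixing_lift L v) v \<noteq> 0"
    using assms by (simp add: det2_fixing_lift points_form_eq_0_iff)
  then show ?thesis by (auto simp: det2_def)
next
  case True
  define l where "l = proj_pt v"
  have "points_form (L - {m}) v = 0" if "m \<in> L" "m \<noteq> l" for m
    using that True assms by (simp add: points_form_eq_0_iff l_def)
  then have "fixing_lift L v = scale2 (points_form (L - {l}) v) (hom_coords l)"
    unfolding fixing_lift_def scale2_def using assms(1) True
    by (simp add: sum.remove[of L l] l_def)
  moreover have "points_form (L - {l}) v \<noteq> 0"
    using assms by (simp add: points_form_eq_0_iff l_def)
  ultimately show ?thesis
    using hom_coords_nonzero[of l] by (auto simp: scale2_def prod_eq_iff)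
qed

lemma fixing_lift_scale2:
  assumes "finite L"
  shows "fixing_lift L (scale2 k v) = scale2 (k ^ (card L - 1)) (fixing_lift L v)"
proof -
  have "points_form (L - {l}) (scale2 k v) = k ^ (card L - 1) * points_form (L - {l}) v"
    if "l \<in> L" for l
    using that assms by (simp add: points_form_scale2)
  then show ?thesis
    by (simp add: fixing_lift_def scale2_def sum_distrib_left mult.left_commute cong: sum.cong)
qed

lemma P1_morphism_fixing_map:
  assumes "finite L" "L \<noteq> {}"
  shows "P1_morphism (fixing_map L)"
proof -
  have "is_hform (card L - 1) (points_form (L - {l}))" if "l \<in> L" for l
    using is_hform_points_form[of "L - {l}"] that assms(1) by simp
  then have "is_hform (card L - 1) (\<lambda>v. fst (fixing_lift L v))"
    "is_hform (card L - 1) (\<lambda>v. snd (fixing_lift L v))"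
    unfolding fixing_lift_def fst_conv snd_conv
    by (auto intro!: is_hform_sum is_hform_cmult assms(1))
  then obtain a b where "(\<lambda>v. fst (fixing_lift L v)) = hform (card L - 1) a"
    "(\<lambda>v. snd (fixing_lift L v)) = hform (card L - 1) b"
    by (auto simp: is_hform_def)
  then have "fixing_lift L = (\<lambda>v. (hform (card L - 1) a v, hform (card L - 1) b v))"
    by (simp add: fun_eq_iff prod_eq_iff)
  then show ?thesis
    unfolding P1_morphism_def fixing_map_def
    using fixing_lift_nonzero[OF assms] by metis
qed

lemma fixing_map_eq_iff:
  assumes "finite L" "L \<noteq> {}"
  shows "fixing_map L q = q \<longleftrightarrow> q \<in> L"
proof -
  have "fixing_map L q = q \<longleftrightarrow> det2 (fixing_lift L (hom_coords q)) (hom_coords q) = 0"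
    unfolding fixing_map_def
    by (rule proj_pt_eq_iff_det2[OF fixing_lift_nonzero[OF assms hom_coords_nonzero]])
  also have "\<dots> \<longleftrightarrow> q \<in> L"
    using assms by (simp add: det2_fixing_lift points_form_eq_0_iff hom_coords_nonzero)
  finally show ?thesis .
qed

lemma points_form_moebius_image:
  assumes "finite S" "a * d - b * c \<noteq> 0"
    and k: "\<And>m. hom_coords (moebius a b c d m) = scale2 (k m) (lin2 a b c d (hom_coords m))"
  shows "points_form (moebius a b c d ` S) (lin2 a b c d v)
           = (\<Prod>m\<in>S. k m * (a * d - b * c)) * points_form S v"
proof -
  have "points_form (moebius a b c d ` S) (lin2 a b c d v)
          = (\<Prod>m\<in>S. det2 (hom_coords (moebius a b c d m)) (lin2 a b c d v))"
    unfolding points_form_def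
    using inj_moebius[OF assms(2)] by (simp add: prod.reindex inj_on_subset)
  also have "\<dots> = (\<Prod>m\<in>S. k m * (a * d - b * c) * det2 (hom_coords m) v)"
    by (simp add: k det2_scale2_left det2_lin2 mult.assoc)
  finally show ?thesis
    by (simp add: points_form_def prod.distrib)
qed

lemma fixing_lift_lin2:
  assumes L: "finite L" and det: "a * d - b * c \<noteq> 0" and inv: "moebius a b c d ` L = L"
  obtains C where "C \<noteq> 0"
    "\<And>v. fixing_lift L (lin2 a b c d v) = scale2 C (lin2 a b c d (fixing_lift L v))"
proof -
  let ?h = "moebius a b c d" and ?M = "lin2 a b c d"
  define D where "D = a * d - b * c"
  have "\<forall>m. \<exists>k. k \<noteq> 0 \<and> hom_coords (?h m) = scale2 k (?M (hom_coords m))"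
    using hom_coords_moebius[OF det] by metis
  then obtain k where k_nz: "\<And>m. k m \<noteq> 0"
    and k: "\<And>m. hom_coords (?h m) = scale2 (k m) (?M (hom_coords m))"
    by metis
  define C where "C = (\<Prod>m\<in>L. k m * D) / D"
  have "C \<noteq> 0"
    using k_nz det L by (simp add: C_def D_def)
  have summand:
    "fst (hom_coords (?h l)) * points_form (L - {?h l}) (?M v)
       = C * (fst (?M (hom_coords l)) * points_form (L - {l}) v)"
    "snd (hom_coords (?h l)) * points_form (L - {?h l}) (?M v)
       = C * (snd (?M (hom_coords l)) * points_form (L - {l}) v)"
    if "l \<in> L" for l v
  proof -
    have "L - {?h l} = ?h ` (L - {l})"
      using inv inj_moebius[OF det] by (simp add: image_set_diff)
    then have "points_form (L - {?h l}) (?M v) = (\<Prod>m\<in>L - {l}. k m * D) * points_form (L - {l}) v"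
      using points_form_moebius_image[OF _ det k] L by (simp add: D_def)
    moreover have C: "(\<Prod>m\<in>L - {l}. k m * D) * k l = C"
      using that L det by (simp add: C_def D_def prod.remove)
    ultimately show "fst (hom_coords (?h l)) * points_form (L - {?h l}) (?M v)
       = C * (fst (?M (hom_coords l)) * points_form (L - {l}) v)"
      "snd (hom_coords (?h l)) * points_form (L - {?h l}) (?M v)
       = C * (snd (?M (hom_coords l)) * points_form (L - {l}) v)"
      by (simp_all add: k scale2_def algebra_simps flip: C)
  qed
  have reindex: "(\<Sum>l\<in>L. f l) = (\<Sum>l\<in>L. f (?h l))" for f :: "P1 \<Rightarrow> complex"
    using sum.reindex[OF inj_on_subset[OF inj_moebius[OF det]], of L f] inv by simp
  have "fixing_lift L (?M v) = scale2 C (?M (fixing_lift L v))" for v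
  proof -
    have "fst (fixing_lift L (?M v)) = (\<Sum>l\<in>L. C * (fst (?M (hom_coords l)) * points_form (L - {l}) v))"
      unfolding fixing_lift_def fst_conv
      by (subst reindex) (simp add: summand)
    moreover have "snd (fixing_lift L (?M v)) = (\<Sum>l\<in>L. C * (snd (?M (hom_coords l)) * points_form (L - {l}) v))"
      unfolding fixing_lift_def snd_conv
      by (subst reindex) (simp add: summand)
    ultimately show ?thesis
      by (simp add: prod_eq_iff scale2_def lin2_def fixing_lift_def sum_distrib_left sum.distrib algebra_simps)
  qed
  with \<open>C \<noteq> 0\<close> show ?thesis ..
qed

lemma fixing_map_moebius_commute:
  assumes L: "finite L" "L \<noteq> {}" and det: "a * d - b * c \<noteq> 0" and inv: "moebius a b c d ` L = L"
  shows "fixing_map L \<circ> moebius a b c d = moebius a b c d \<circ> fixing_map L"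
proof
  fix p
  let ?h = "moebius a b c d" and ?M = "lin2 a b c d"
  obtain k where k: "k \<noteq> 0" "hom_coords (?h p) = scale2 k (?M (hom_coords p))"
    using hom_coords_moebius[OF det] .
  obtain C where C: "C \<noteq> 0" "\<And>v. fixing_lift L (?M v) = scale2 C (?M (fixing_lift L v))"
    using fixing_lift_lin2[OF L(1) det inv] by blast
  have "fixing_map L (?h p) = proj_pt (scale2 (k ^ (card L - 1)) (fixing_lift L (?M (hom_coords p))))"
    by (simp add: fixing_map_def k(2) fixing_lift_scale2 L(1))
  also have "\<dots> = proj_pt (?M (fixing_lift L (hom_coords p)))"
    by (simp add: proj_pt_scale2 k(1) C)
  also have "\<dots> = ?h (fixing_map L p)"
    by (simp add: fixing_map_def moebius_proj_pt fixing_lift_nonzero[OF L hom_coords_nonzero])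
  finally show "(fixing_map L \<circ> ?h) p = (?h \<circ> fixing_map L) p"
    by simp
qed

lemma PGL2_elim:
  assumes "h \<in> carrier PGL2"
  obtains a b c d where "a * d - b * c \<noteq> 0" "h = moebius a b c d"
  using assms by (auto simp: PGL2_def)

lemma inj_PGL2: "h \<in> carrier PGL2 \<Longrightarrow> inj h"
  by (metis PGL2_elim inj_moebius)

lemma fixing_map_PGL2_commute:
  "finite L \<Longrightarrow> L \<noteq> {} \<Longrightarrow> h \<in> carrier PGL2 \<Longrightarrow> h ` L = L \<Longrightarrow> fixing_map L \<circ> h = h \<circ> fixing_map L"
  by (metis PGL2_elim fixing_map_moebius_commute)

theorem mainTheorem12:
  fixes H :: "(P1 \<Rightarrow> P1) set" and \<Lambda> :: "P1 set"
  assumes "subgroup H PGL2" and "finite H" and "finite \<Lambda>"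
  shows "(\<Lambda> \<noteq> {} \<and> (\<forall>h\<in>H. h ` \<Lambda> = \<Lambda>)) \<longleftrightarrow>
         (\<exists>\<delta>. P1_morphism \<delta> \<and> (\<forall>h\<in>H. \<delta> \<circ> h = h \<circ> \<delta>) \<and> \<Lambda> = {q. \<delta> q = q})"
proof
  assume "\<Lambda> \<noteq> {} \<and> (\<forall>h\<in>H. h ` \<Lambda> = \<Lambda>)"
  with assms(3) subgroup.subset[OF assms(1)]
  show "\<exists>\<delta>. P1_morphism \<delta> \<and> (\<forall>h\<in>H. \<delta> \<circ> h = h \<circ> \<delta>) \<and> \<Lambda> = {q. \<delta> q = q}"
    by (intro exI[of _ "fixing_map \<Lambda>"])
      (auto simp: P1_morphism_fixing_map fixing_map_eq_iff intro!: fixing_map_PGL2_commute)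
next
  assume "\<exists>\<delta>. P1_morphism \<delta> \<and> (\<forall>h\<in>H. \<delta> \<circ> h = h \<circ> \<delta>) \<and> \<Lambda> = {q. \<delta> q = q}"
  then obtain \<delta> where \<delta>: "P1_morphism \<delta>" "\<forall>h\<in>H. \<delta> \<circ> h = h \<circ> \<delta>" "\<Lambda> = {q. \<delta> q = q}"
    by blast
  have "\<Lambda> \<noteq> {}"
    using P1_morphism_has_fixed_point[OF \<delta>(1)] \<delta>(3) by auto
  moreover have "h ` \<Lambda> = \<Lambda>" if "h \<in> H" for h
    using image_fixed_points_eq[of \<delta> h] inj_PGL2 subgroup.subset[OF assms(1)] \<delta>(2,3) assms(3) that
    by auto
  ultimately show "\<Lambda> \<noteq> {} \<and> (\<forall>h\<in>H. h ` \<Lambda> = \<Lambda>)"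
    by blast
qed

end
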